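(* Assume Assumption A and let $\alpha>0$. For each $\delta\ge0$, the set $D_\delta$ is positively invariant under the semiflow generated by system (S), i.e. if $(\varphi,\tau_0)\in D_\delta$ then $((A_{1,t},\dots,A_{n,t}),(\tau_1(t),\dots,\tau_n(t)))\in D_\delta$ for all $t\ge0$, where $A_{i,t}(\theta):=A_i(t+\theta)$, $\theta\le0$. Moreover, for each $\delta>0$ there exists $M(\delta)>0$, independent of the initial conditions, such that for every $(\varphi,\tau_0)\in D_\delta$ with $\varphi_i\ge0$ and $\tau_{i0}>0$ for all $i$, the corresponding solution satisfies $$\limsup_{t\to+\infty}\max_{i=1,\dots,n}A_i(t)\le M(\delta).$$
   Context: For $\alpha>0$, $X_\alpha:=\{\phi\in C((-\infty,0]): e^{-\alpha|\cdot|}\phi(\cdot)\in BUC((-\infty,0])\cap \mathrm{Lip}((-\infty,0])\}$. The $n$-species system (S): for $i=1,\dots,n$, $$A_i'(t)=-\mu_{A_i}A_i(t)+\beta_i e^{-\mu_{J_i}\tau_i(t)}\frac{f_i(Z_i(t))}{f_i(Z_i(t-\tau_i(t)))}A_i(t-\tau_i(t)),\quad t\ge0,$$ $$\int_{t-\tau_i(t)}^{t}f_i(Z_i(\sigma))\,d\sigma=\int_{-\tau_{i0}}^{0}f_i(Z_{i\varphi}(\sigma))\,d\sigma,\quad t\ge0,$$ with $A_i(t)=\varphi_i(t)$ for $t\le0$, $\tau_i(0)=\tau_{i0}\ge0$, where $Z_i(t)=\sum_{j=1}^n\zeta_{ij}A_j(t)$, $Z_{i\varphi}(t)=\sum_{j=1}^n\zeta_{ij}\varphi_j(t)$,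 $\zeta_{ij}\ge0$. A solution consists of continuous $A_i:\mathbb{R}\to[0,\infty)$, differentiable on $[0,\infty)$, and $\tau_i:[0,\infty)\to[0,\infty)$ satisfying these equations for all $t\ge0$. Assumption A: for each $i$, (i) $\mu_{A_i}>0$, $\mu_{J_i}>0$, $\beta_i>0$, $\zeta_{ii}>0$; (ii) $f_i:\mathbb{R}\to(0,\infty)$ is Lipschitz continuous and continuously differentiable with $f_i>0$, $f_i'\le0$ on $\mathbb{R}$, $\lim_{x\to+\infty}f_i(x)=0$, and $\sup_{x\ge0}\frac{f_i(x)}{f_i(cx)}<+\infty$ for every $c\ge1$. For $\delta\ge0$, $D_\delta:=\{(\varphi,\tau_0)\in X_\alpha^n\times[0,+\infty)^n: \int_{-\tau_{i0}}^0 f_i(Z_{i\varphi}(\sigma))\,d\sigma\ge\delta\ \ \forall i=1,\dots,n\}$, with $\varphi=(\varphi_1,\dots,\varphi_n)$, $\tau_0=(\tau_{10},\dots,\tau_{n0})$. *)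

theory Defs
  imports "HOL-Analysis.Analysis"
begin

definition X_space :: "real \<Rightarrow> (real \<Rightarrow> real) set" where
  "X_space \<alpha> = {\<phi>. continuous_on {..0} \<phi> \<and>
     bounded ((\<lambda>\<theta>. exp (- \<alpha> * \<bar>\<theta>\<bar>) * \<phi> \<theta>) ` {..0}) \<and>
     uniformly_continuous_on {..0} (\<lambda>\<theta>. exp (- \<alpha> * \<bar>\<theta>\<bar>) * \<phi> \<theta>) \<and>
     (\<exists>L. L-lipschitz_on {..0} (\<lambda>\<theta>. exp (- \<alpha> * \<bar>\<theta>\<bar>) * \<phi> \<theta>))}"

definition Zfun :: "('n::finite \<Rightarrow> 'n \<Rightarrow> real) \<Rightarrow> ('n \<Rightarrow> real \<Rightarrow> real) \<Rightarrow> 'n \<Rightarrow> real \<Rightarrow> real" where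
  "Zfun \<zeta> A i t = (\<Sum>j\<in>UNIV. \<zeta> i j * A j t)"

definition assumptionA ::
  "('n::finite \<Rightarrow> real) \<Rightarrow> ('n \<Rightarrow> real) \<Rightarrow> ('n \<Rightarrow> real) \<Rightarrow> ('n \<Rightarrow> 'n \<Rightarrow> real)
   \<Rightarrow> ('n \<Rightarrow> real \<Rightarrow> real) \<Rightarrow> bool" where
  "assumptionA \<mu>A \<mu>J \<beta> \<zeta> f \<longleftrightarrow>
    (\<forall>i j. \<zeta> i j \<ge> 0) \<and>
    (\<forall>i. \<mu>A i > 0 \<and> \<mu>J i > 0 \<and> \<beta> i > 0 \<and> \<zeta> i i > 0 \<and>
       (\<exists>L. L-lipschitz_on UNIV (f i)) \<and>
       (f i) C1_differentiable_on UNIV \<and>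
       (\<forall>x. f i x > 0) \<and> (\<forall>x. deriv (f i) x \<le> 0) \<and>
       ((f i) \<longlongrightarrow> 0) at_top \<and>
       (\<forall>c::real. c \<ge> 1 \<longrightarrow> (\<exists>K. \<forall>x\<ge>0. f i x / f i (c * x) \<le> K)))"

definition D_set :: "real \<Rightarrow> ('n::finite \<Rightarrow> 'n \<Rightarrow> real) \<Rightarrow> ('n \<Rightarrow> real \<Rightarrow> real) \<Rightarrow> real
   \<Rightarrow> (('n \<Rightarrow> real \<Rightarrow> real) \<times> ('n \<Rightarrow> real)) set" where
  "D_set \<alpha> \<zeta> f \<delta> = {(\<phi>, \<tau>0). (\<forall>i. \<phi> i \<in> X_space \<alpha>) \<and> (\<forall>i. \<tau>0 i \<ge> 0) \<and>
      (\<forall>i. integral {- \<tau>0 i..0} (\<lambda>\<sigma>. f i (Zfun \<zeta> \<phi> i \<sigma>)) \<ge> \<delta>)}"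

text \<open>A solution (A, tau) of system (S) with initial data (phi, tau0).
  Differentiability on [0,infinity) is one-sided at 0.\<close>
definition is_solution ::
  "('n::finite \<Rightarrow> real) \<Rightarrow> ('n \<Rightarrow> real) \<Rightarrow> ('n \<Rightarrow> real) \<Rightarrow> ('n \<Rightarrow> 'n \<Rightarrow> real)
   \<Rightarrow> ('n \<Rightarrow> real \<Rightarrow> real) \<Rightarrow> ('n \<Rightarrow> real \<Rightarrow> real) \<Rightarrow> ('n \<Rightarrow> real)
   \<Rightarrow> ('n \<Rightarrow> real \<Rightarrow> real) \<Rightarrow> ('n \<Rightarrow> real \<Rightarrow> real) \<Rightarrow> bool" where
  "is_solution \<mu>A \<mu>J \<beta> \<zeta> f \<phi> \<tau>0 A \<tau> \<longleftrightarrow>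
    (\<forall>i. continuous_on UNIV (A i)) \<and>
    (\<forall>i t. A i t \<ge> 0) \<and>
    (\<forall>i t. t \<le> 0 \<longrightarrow> A i t = \<phi> i t) \<and>
    (\<forall>i. \<tau> i 0 = \<tau>0 i) \<and>
    (\<forall>i t. t \<ge> 0 \<longrightarrow> \<tau> i t \<ge> 0) \<and>
    (\<forall>i t. t \<ge> 0 \<longrightarrow>
       (A i has_real_derivative
          (- \<mu>A i * A i t + \<beta> i * exp (- \<mu>J i * \<tau> i t)
             * (f i (Zfun \<zeta> A i t) / f i (Zfun \<zeta> A i (t - \<tau> i t))) * A i (t - \<tau> i t)))
       (at t within {0..})) \<and>
    (\<forall>i t. t \<ge> 0 \<longrightarrow>
       integral {t - \<tau> i t..t} (\<lambda>\<sigma>. f i (Zfun \<zeta> A i \<sigma>))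
       = integral {- \<tau>0 i..0} (\<lambda>\<sigma>. f i (Zfun \<zeta> \<phi> i \<sigma>)))"

end

theory Submission
  imports Defs
begin

text \<open>Invariance of \<open>D_\<delta>\<close>: the integral of \<open>f i (Z i)\<close> over the maturation window
  \<open>[t - \<tau> i t, t]\<close> is constant along solutions, and this is exactly the integral condition of
  \<open>D_\<delta>\<close> for the shifted state. The shifted history stays in \<open>X_\<alpha>\<close> because \<open>A i\<close> is
  \<open>C\<^sup>1\<close> with bounded derivative on \<open>[0, t]\<close>, while further back it is a damped copy of the
  initial history.

  Dissipativity: since \<open>f i\<close> decreases to \<open>0\<close> and the window integral is at least \<open>\<delta>\<close>, a
  large density at the start of a window forces a long delay, which damps the birth term through
  \<open>exp (- \<mu>J i * \<tau> i t)\<close>. Combined with the ratio bound on \<open>f i\<close> from Assumption A, at a time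
  where \<open>A i \<ge> a\<close> and all delayed densities are at most \<open>2 a\<close>, the birth term is at most
  \<open>\<mu>A i * a / 2\<close> or a constant. By a first-passage argument this yields a uniform bound. It
  also shows that if \<open>max\<^sub>i A i\<close> is eventually below \<open>4 p / 3\<close> for a \<open>p\<close> above the constant
  level, then it is eventually at most \<open>2 p / 3\<close>; so the limit superior cannot exceed that level.\<close>

lemma integral_ge_const_times_length:
  fixes h :: "real \<Rightarrow> real"
  assumes "continuous_on {a..b} h" "a \<le> b" "\<And>x. x \<in> {a..b} \<Longrightarrow> m \<le> h x"
  shows "m * (b - a) \<le> integral {a..b} h"
proof -
  have "integral {a..b} (\<lambda>x. m) \<le> integral {a..b} h"
    by (rule integral_le) (auto intro: integrable_continuous_interval assms)
  then show ?thesis using assms(2) by (simp add: mult.commute)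
qed

lemma integral_pos_if_pos:
  fixes h :: "real \<Rightarrow> real"
  assumes "continuous_on {a..b} h" "a < b" "\<And>x. x \<in> {a..b} \<Longrightarrow> 0 < h x"
  shows "0 < integral {a..b} h"
proof -
  obtain x0 where x0: "x0 \<in> {a..b}" "\<And>y. y \<in> {a..b} \<Longrightarrow> h x0 \<le> h y"
    using continuous_attains_inf[of "{a..b}" h] assms by auto
  have "0 < h x0 * (b - a)" using assms x0 by auto
  also have "\<dots> \<le> integral {a..b} h"
    by (rule integral_ge_const_times_length) (use assms x0 in auto)
  finally show ?thesis .
qed

lemma lipschitz_on_interval_if_deriv_bounded:
  fixes h :: "real \<Rightarrow> real"
  assumes "\<And>x. x \<in> {a..b} \<Longrightarrow> (h has_real_derivative h' x) (at x within {a..b})"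
    and "\<And>x. x \<in> {a..b} \<Longrightarrow> \<bar>h' x\<bar> \<le> C" and "0 \<le> C"
  shows "C-lipschitz_on {a..b} h"
proof (rule lipschitz_onI)
  fix x y assume "x \<in> {a..b}" "y \<in> {a..b}"
  then show "dist (h x) (h y) \<le> C * dist x y"
    using field_differentiable_bound[of "{a..b}" h h' C x y] assms by (simp add: dist_real_def)
qed fact

lemma lipschitz_on_atMost_glue:
  fixes h :: "real \<Rightarrow> real"
  assumes "L-lipschitz_on {..b} h" "L-lipschitz_on {b..c} h"
  shows "L-lipschitz_on {..c} h"
proof (rule lipschitz_on_leI)
  fix x y assume xy: "x \<in> {..c}" "y \<in> {..c}" "x \<le> y"
  consider "y \<le> b" | "b \<le> x" | "x < b" "b < y" by linarith
  then show "dist (h x) (h y) \<le> L * dist x y"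
  proof cases
    case 3
    have "dist (h x) (h y) \<le> dist (h x) (h b) + dist (h b) (h y)" by (rule dist_triangle)
    also have "\<dots> \<le> L * dist x b + L * dist b y"
      using 3 xy by (intro add_mono lipschitz_onD[OF assms(1)] lipschitz_onD[OF assms(2)]) auto
    also have "\<dots> = L * dist x y" using 3 by (simp add: dist_real_def algebra_simps)
    finally show ?thesis .
  qed (use xy lipschitz_onD[OF assms(1)] lipschitz_onD[OF assms(2)] in auto)
qed (rule lipschitz_on_nonneg[OF assms(1)])

lemma lipschitz_on_damped_shift:
  fixes g :: "real \<Rightarrow> real"
  assumes "L-lipschitz_on {..0} g" "\<bar>c\<bar> \<le> 1"
  shows "L-lipschitz_on {..-t} (\<lambda>\<theta>. c * g (\<theta> + t))"
proof (rule lipschitz_onI)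
  fix x y assume "x \<in> {..-t}" "y \<in> {..-t}"
  then have "dist (g (x + t)) (g (y + t)) \<le> L * dist x y"
    using lipschitz_onD[OF assms(1), of "x + t" "y + t"] by (simp add: dist_real_def)
  moreover have "dist (c * g (x + t)) (c * g (y + t)) = \<bar>c\<bar> * dist (g (x + t)) (g (y + t))"
    by (simp add: dist_real_def abs_mult flip: right_diff_distrib)
  moreover have "\<bar>c\<bar> * dist (g (x + t)) (g (y + t)) \<le> dist (g (x + t)) (g (y + t))"
    by (rule mult_left_le_one_le) (use assms(2) in auto)
  ultimately show "dist (c * g (x + t)) (c * g (y + t)) \<le> L * dist x y" by linarith
qed (rule lipschitz_on_nonneg[OF assms(1)])

lemma stays_below_if_deriv_nonpos_above:
  fixes x :: "real \<Rightarrow> real"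
  assumes cont: "continuous_on UNIV x"
    and der: "\<And>z. z > T \<Longrightarrow> x z \<ge> b \<Longrightarrow> \<exists>D. (x has_real_derivative D) (at z) \<and> D \<le> 0"
    and "s0 \<ge> T" "x s0 \<le> b" "s \<ge> s0"
  shows "x s \<le> b"
proof (rule ccontr)
  assume "\<not> x s \<le> b"
  define K where "K = {v\<in>{s0..s}. x v \<le> b}"
  have "closed K" unfolding K_def
    using continuous_closed_preimage[of "{s0..s}" x "{..b}"] continuous_on_subset[OF cont]
    by (auto simp: vimage_def Int_def)
  moreover have "s0 \<in> K" "bdd_above K" using assms unfolding K_def by (auto intro: bdd_aboveI[of _ s])
  ultimately have "Sup K \<in> K" using closed_contains_Sup by blast
  define t where "t = Sup K"
  have "t \<in> K" using \<open>Sup K \<in> K\<close> unfolding t_def .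
  moreover have "t \<noteq> s" using \<open>t \<in> K\<close> \<open>\<not> x s \<le> b\<close> unfolding K_def by auto
  ultimately have t: "t \<in> K" "t < s" unfolding K_def by auto
  have above: "x v > b" if "t < v" "v \<le> s" for v
    using that t cSup_upper[OF _ \<open>bdd_above K\<close>, of v] unfolding t_def K_def by force
  have "x s \<le> x t"
  proof (rule DERIV_nonpos_imp_decreasing_open[of t s x])
    show "continuous_on {t..s} x" using continuous_on_subset[OF cont] by auto
    fix z assume "t < z" "z < s"
    moreover from this have "z > T" using t assms(3) unfolding K_def by auto
    ultimately show "\<exists>D. (x has_real_derivative D) (at z) \<and> D \<le> 0"
      using der less_imp_le[OF above] by simp
  qed (use t in auto)
  then show False using t \<open>\<not> x s \<le> b\<close> unfolding K_def by auto
qed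

lemma eventually_below_if_deriv_le_neg_above:
  fixes x :: "real \<Rightarrow> real"
  assumes cont: "continuous_on UNIV x" and "\<kappa> > 0"
    and der: "\<And>z. z > T \<Longrightarrow> x z \<ge> b \<Longrightarrow> \<exists>D. (x has_real_derivative D) (at z) \<and> D \<le> - \<kappa>"
  shows "eventually (\<lambda>s. x s \<le> b) at_top"
proof -
  define T1 where "T1 = T + 1"
  define H where "H = \<bar>x T1 - b\<bar> / \<kappa> + 1"
  have "\<kappa> * H = \<bar>x T1 - b\<bar> + \<kappa>" using \<open>\<kappa> > 0\<close> unfolding H_def by (simp add: field_simps)
  then have H: "H > 0" "\<kappa> * H > x T1 - b"
    using \<open>\<kappa> > 0\<close> unfolding H_def by (auto intro: add_nonneg_pos)
  have "\<exists>s0\<in>{T1..T1+H}. x s0 \<le> b"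
  proof (rule ccontr)
    assume "\<not> ?thesis"
    then have above: "\<And>v. v \<in> {T1..T1+H} \<Longrightarrow> x v > b" by force
    have "x (T1 + H) + \<kappa> * (T1 + H) \<le> x T1 + \<kappa> * T1"
    proof (rule DERIV_nonpos_imp_decreasing_open[of T1 "T1 + H" "\<lambda>v. x v + \<kappa> * v"])
      show "continuous_on {T1..T1 + H} (\<lambda>v. x v + \<kappa> * v)"
        by (intro continuous_intros continuous_on_subset[OF cont]) auto
      fix z assume "T1 < z" "z < T1 + H"
      moreover from this have "z > T" unfolding T1_def by simp
      ultimately obtain D where "(x has_real_derivative D) (at z)" "D \<le> -\<kappa>"
        using der less_imp_le[OF above] by (meson atLeastAtMost_iff less_imp_le)
      then show "\<exists>D. ((\<lambda>v. x v + \<kappa> * v) has_real_derivative D) (at z) \<and> D \<le> 0"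
        by (intro exI[of _ "D + \<kappa>"]) (auto intro!: derivative_eq_intros)
    qed (use H in auto)
    then show False using above[of "T1 + H"] H by (simp add: algebra_simps)
  qed
  then obtain s0 where "s0 \<ge> T1" "x s0 \<le> b" by auto
  moreover have "\<exists>D. (x has_real_derivative D) (at z) \<and> D \<le> 0" if z: "z > T" "x z \<ge> b" for z
  proof -
    obtain D where "(x has_real_derivative D) (at z)" "D \<le> - \<kappa>" using der[OF z] by blast
    then show ?thesis using \<open>\<kappa> > 0\<close> by (intro exI[of _ D]) simp
  qed
  ultimately have "x s \<le> b" if "s \<ge> s0" for s
    using stays_below_if_deriv_nonpos_above[OF cont, of T b s0 s] that unfolding T1_def by simp
  then show ?thesis unfolding eventually_at_top_linorder by blast
qed

lemma first_hitting_time: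
  fixes x :: "'n::finite \<Rightarrow> real \<Rightarrow> real"
  assumes "\<And>j. continuous_on UNIV (x j)" "s \<ge> 0" "b \<le> x i s"
  obtains t k where "t \<ge> 0" "b \<le> x k t" "\<And>j v. 0 \<le> v \<Longrightarrow> v < t \<Longrightarrow> x j v < b"
proof -
  define F where "F = (\<Union>j. {0..} \<inter> x j -` {b..})"
  have "closed (x j -` {b..})" for j
    using assms(1)[of j] by (intro continuous_closed_vimage) (auto simp: continuous_on_eq_continuous_at)
  then have "closed F" unfolding F_def by (intro closed_UN closed_Int) auto
  moreover have "s \<in> F" "bdd_below F" using assms unfolding F_def by (auto intro: bdd_belowI[of _ 0])
  ultimately have "Inf F \<in> F" using closed_contains_Inf by blast
  moreover have "x j v < b" if "0 \<le> v" "v < Inf F" for j v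
  proof -
    have "v \<notin> F" using that cInf_lower[OF _ \<open>bdd_below F\<close>, of v] by force
    then show ?thesis using that(1) unfolding F_def by (simp add: not_le)
  qed
  ultimately show ?thesis using that unfolding F_def by blast
qed

lemma deriv_nonneg_at_first_hitting:
  fixes x :: "real \<Rightarrow> real"
  assumes "(x has_real_derivative D) (at t)" "t > 0" "b \<le> x t"
    and "\<And>v. 0 \<le> v \<Longrightarrow> v < t \<Longrightarrow> x v < b"
  shows "D \<ge> 0"
proof (rule ccontr)
  assume "\<not> D \<ge> 0"
  then obtain d where "d > 0" "\<And>h. h > 0 \<Longrightarrow> h < d \<Longrightarrow> x t < x (t - h)"
    using DERIV_neg_dec_left[OF assms(1)] by force
  then have "x t < x (t - min (d/2) (t/2))" using \<open>t > 0\<close> by auto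
  moreover have "x (t - min (d/2) (t/2)) < b" using \<open>t > 0\<close> \<open>d > 0\<close> by (intro assms(4)) auto
  ultimately show False using assms(3) by simp
qed

lemma Limsup_le_if_contracting:
  fixes Y :: "real \<Rightarrow> real"
  assumes "eventually (\<lambda>t. Y t \<le> B) at_top" "M \<ge> 0"
    and contract: "\<And>p. p > M \<Longrightarrow> eventually (\<lambda>t. Y t < 4 * p / 3) at_top
        \<Longrightarrow> eventually (\<lambda>t. Y t \<le> 2 * p / 3) at_top"
  shows "Limsup at_top (\<lambda>t. ereal (Y t)) \<le> ereal M"
proof (rule ccontr)
  assume "\<not> ?thesis"
  moreover have "Limsup at_top (\<lambda>t. ereal (Y t)) \<le> ereal B"
    using assms(1) by (intro Limsup_bounded) (auto elim: eventually_mono)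
  ultimately obtain p where p: "Limsup at_top (\<lambda>t. ereal (Y t)) = ereal p" "p > M"
    by (cases "Limsup at_top (\<lambda>t. ereal (Y t))") auto
  then have "eventually (\<lambda>t. ereal (Y t) < ereal (4 * p / 3)) at_top"
    using \<open>M \<ge> 0\<close> by (intro Limsup_lessD) auto
  then have "eventually (\<lambda>t. Y t \<le> 2 * p / 3) at_top"
    by (intro contract[OF \<open>p > M\<close>]) auto
  then have "Limsup at_top (\<lambda>t. ereal (Y t)) \<le> ereal (2 * p / 3)"
    by (intro Limsup_bounded) (auto elim: eventually_mono)
  then show False using p \<open>M \<ge> 0\<close> by simp
qed

lemma exists_scaled_arg_below:
  fixes g :: "real \<Rightarrow> real"
  assumes "(g \<longlongrightarrow> 0) at_top" "c > 0" "\<epsilon> > 0"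
  shows "\<exists>k\<ge>0. g (c * k) < \<epsilon>"
proof -
  obtain Y where "\<And>y. y \<ge> Y \<Longrightarrow> g y < \<epsilon>"
    using order_tendstoD(2)[OF assms(1,3)] unfolding eventually_at_top_linorder by blast
  then show ?thesis using assms(2) by (intro exI[of _ "max Y 0 / c"]) auto
qed

lemma exists_exp_decay_le:
  fixes b \<mu> q :: real
  assumes "b > 0" "\<mu> > 0" "q > 0"
  shows "\<exists>l>0. b * exp (- \<mu> * l) \<le> q"
proof -
  define l where "l = \<bar>ln (q / b)\<bar> / \<mu> + 1"
  have "- \<mu> * l = - \<bar>ln (q / b)\<bar> - \<mu>" using assms unfolding l_def by (simp add: field_simps)
  then have "- \<mu> * l \<le> ln (q / b)" using assms by linarith
  then have "exp (- \<mu> * l) \<le> q / b" using assms by (metis exp_le_cancel_iff exp_ln divide_pos_pos)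
  moreover have "l > 0" using assms unfolding l_def by (simp add: add_nonneg_pos)
  ultimately show ?thesis using assms by (intro exI[of _ l]) (auto simp: field_simps)
qed

locale solution =
  fixes \<mu>A \<mu>J \<beta> :: "'n::finite \<Rightarrow> real" and \<zeta> :: "'n \<Rightarrow> 'n \<Rightarrow> real"
    and f :: "'n \<Rightarrow> real \<Rightarrow> real" and \<phi> :: "'n \<Rightarrow> real \<Rightarrow> real" and \<tau>0 :: "'n \<Rightarrow> real"
    and A :: "'n \<Rightarrow> real \<Rightarrow> real" and \<tau> :: "'n \<Rightarrow> real \<Rightarrow> real"
  assumes assmA: "assumptionA \<mu>A \<mu>J \<beta> \<zeta> f"
    and solves: "is_solution \<mu>A \<mu>J \<beta> \<zeta> f \<phi> \<tau>0 A \<tau>"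
    and tau0_nonneg: "\<And>i. \<tau>0 i \<ge> 0"
begin

lemma zeta_nonneg: "\<zeta> i j \<ge> 0"
  using assmA unfolding assumptionA_def by auto

lemma params_pos: "\<mu>A i > 0" "\<mu>J i > 0" "\<beta> i > 0" "\<zeta> i i > 0"
  using assmA unfolding assumptionA_def by auto

lemma f_pos: "f i x > 0"
  using assmA unfolding assumptionA_def by auto

lemma f_continuous: "continuous_on UNIV (f i)"
  using assmA lipschitz_on_continuous_on unfolding assumptionA_def by blast

lemma f_antimono:
  assumes "x \<le> y"
  shows "f i y \<le> f i x"
proof (rule DERIV_nonpos_imp_nonincreasing[OF assms])
  have "f i differentiable at z" "deriv (f i) z \<le> 0" for z
    using assmA unfolding assumptionA_def C1_differentiable_on_eq by auto
  then show "\<exists>D. (f i has_real_derivative D) (at z) \<and> D \<le> 0" for z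
    using DERIV_deriv_iff_real_differentiable by blast
qed

lemma A_continuous: "continuous_on UNIV (A i)"
  using solves unfolding is_solution_def by auto

lemma A_nonneg: "A i t \<ge> 0"
  using solves unfolding is_solution_def by auto

lemma A_initial: "t \<le> 0 \<Longrightarrow> A i t = \<phi> i t"
  using solves unfolding is_solution_def by auto

lemma tau_nonneg: "t \<ge> 0 \<Longrightarrow> \<tau> i t \<ge> 0"
  using solves unfolding is_solution_def by auto

definition fZ :: "'n \<Rightarrow> real \<Rightarrow> real" where
  "fZ i t = f i (Zfun \<zeta> A i t)"

definition row_sum :: "'n \<Rightarrow> real" where
  "row_sum i = (\<Sum>j\<in>UNIV. \<zeta> i j)"

definition maturation_level :: "'n \<Rightarrow> real" where
  "maturation_level i = integral {- \<tau>0 i..0} (\<lambda>\<sigma>. f i (Zfun \<zeta> \<phi> i \<sigma>))"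

definition birth :: "'n \<Rightarrow> real \<Rightarrow> real" where
  "birth i t = \<beta> i * exp (- \<mu>J i * \<tau> i t) * (fZ i t / fZ i (t - \<tau> i t)) * A i (t - \<tau> i t)"

lemma A_has_derivative: "t \<ge> 0 \<Longrightarrow>
    (A i has_real_derivative - \<mu>A i * A i t + birth i t) (at t within {0..})"
  using solves unfolding is_solution_def birth_def fZ_def by (auto simp: mult.assoc)

lemma A_has_derivative_at:
  assumes "t > 0"
  shows "(A i has_real_derivative - \<mu>A i * A i t + birth i t) (at t)"
proof -
  have "(A i has_real_derivative - \<mu>A i * A i t + birth i t) (at t within {0<..})"
    by (rule DERIV_subset[OF A_has_derivative]) (use assms in auto)
  then show ?thesis using at_within_open[of t "{0<..}"] assms by auto
qed

lemma fZ_continuous: "continuous_on X (fZ i)"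
proof -
  have "continuous_on UNIV (Zfun \<zeta> A i)"
    unfolding Zfun_def by (intro continuous_intros A_continuous)
  then show ?thesis
    unfolding fZ_def using continuous_on_compose2[OF f_continuous] continuous_on_subset by blast
qed

lemma fZ_integrable: "fZ i integrable_on {a..b}"
  by (rule integrable_continuous_interval[OF fZ_continuous])

lemma fZ_pos: "fZ i t > 0"
  unfolding fZ_def by (rule f_pos)

lemma diag_le_Zfun: "\<zeta> i i * A i t \<le> Zfun \<zeta> A i t"
  unfolding Zfun_def using sum_mono2[of UNIV "{i}" "\<lambda>j. \<zeta> i j * A j t"] zeta_nonneg A_nonneg
  by auto

lemma Zfun_nonneg: "0 \<le> Zfun \<zeta> A i t"
  unfolding Zfun_def using zeta_nonneg A_nonneg by (auto intro: sum_nonneg)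

lemma Zfun_le_row_sum: "(\<And>j. A j t \<le> b) \<Longrightarrow> Zfun \<zeta> A i t \<le> row_sum i * b"
  unfolding Zfun_def row_sum_def sum_distrib_right
  by (rule sum_mono) (use zeta_nonneg in \<open>auto intro: mult_left_mono\<close>)

lemma fZ_le_f0: "fZ i t \<le> f i 0"
  unfolding fZ_def by (rule f_antimono[OF Zfun_nonneg])

lemma maturation_level_eq: "maturation_level i = integral {- \<tau>0 i..0} (fZ i)"
  unfolding maturation_level_def fZ_def by (rule integral_cong) (auto simp: Zfun_def A_initial)

lemma window_integral_eq: "t \<ge> 0 \<Longrightarrow> integral {t - \<tau> i t..t} (fZ i) = maturation_level i"
  using solves unfolding is_solution_def fZ_def maturation_level_def by auto

text \<open>The maturation windows can never reach further back than the initial one: otherwise the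
  window integral of the positive \<open>fZ i\<close> would exceed its initial value.\<close>
lemma delayed_time_ge:
  assumes "t \<ge> 0"
  shows "- \<tau>0 i \<le> t - \<tau> i t"
proof (rule ccontr)
  define u where "u = t - \<tau> i t"
  assume "\<not> - \<tau>0 i \<le> t - \<tau> i t"
  then have u: "u < - \<tau>0 i" unfolding u_def by simp
  have "integral {u..- \<tau>0 i} (fZ i) + integral {- \<tau>0 i..t} (fZ i) = integral {u..t} (fZ i)"
    by (rule Henstock_Kurzweil_Integration.integral_combine)
      (use u tau0_nonneg[of i] assms fZ_integrable in auto)
  moreover have "integral {- \<tau>0 i..0} (fZ i) + integral {0..t} (fZ i) = integral {- \<tau>0 i..t} (fZ i)"
    by (rule Henstock_Kurzweil_Integration.integral_combine)
      (use tau0_nonneg[of i] assms fZ_integrable in auto)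
  moreover have "0 < integral {u..- \<tau>0 i} (fZ i)"
    by (rule integral_pos_if_pos[OF fZ_continuous]) (use u fZ_pos in auto)
  moreover have "0 \<le> integral {0..t} (fZ i)"
    by (rule integral_nonneg[OF fZ_integrable]) (use fZ_pos less_imp_le in auto)
  ultimately show False
    using window_integral_eq[OF assms, of i] maturation_level_eq[of i] unfolding u_def by linarith
qed

lemma tau_pos: "t \<ge> 0 \<Longrightarrow> maturation_level i > 0 \<Longrightarrow> \<tau> i t > 0"
  using tau_nonneg[of t i] window_integral_eq[of t i] by (cases "\<tau> i t = 0") auto

lemma birth_nonneg: "0 \<le> birth i t"
  unfolding birth_def
  using params_pos[of i] fZ_pos[of i t] fZ_pos[of i "t - \<tau> i t"] A_nonneg[of i "t - \<tau> i t"]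
  by (intro mult_nonneg_nonneg divide_nonneg_nonneg) auto

lemma A_decay_bound:
  assumes "0 \<le> u" "u \<le> v"
  shows "A i u * exp (- \<mu>A i * (v - u)) \<le> A i v"
proof -
  define E where "E s = exp (\<mu>A i * s) * A i s" for s
  have "E u \<le> E v"
  proof (rule DERIV_nonneg_imp_increasing_open[OF assms(2)])
    show "continuous_on {u..v} E"
      unfolding E_def by (intro continuous_intros continuous_on_subset[OF A_continuous]) auto
    fix z assume "u < z" "z < v"
    then have "z > 0" using assms by simp
    have "(E has_real_derivative exp (\<mu>A i * z) * birth i z) (at z)"
      unfolding E_def
      by (rule derivative_eq_intros A_has_derivative_at[OF \<open>z > 0\<close>] refl)+
         (simp add: algebra_simps)
    then show "\<exists>D. (E has_real_derivative D) (at z) \<and> 0 \<le> D"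
      using birth_nonneg by auto
  qed
  then have "E u * exp (- \<mu>A i * v) \<le> E v * exp (- \<mu>A i * v)"
    by (intro mult_right_mono) auto
  then show ?thesis unfolding E_def by (simp add: algebra_simps flip: exp_add)
qed

lemma tau_mult_le_maturation_level:
  assumes "t \<ge> 0" and bound: "\<And>j v. - \<tau>0 i \<le> v \<Longrightarrow> v \<le> t \<Longrightarrow> A j v \<le> b"
  shows "\<tau> i t * f i (row_sum i * b) \<le> maturation_level i"
proof -
  have "f i (row_sum i * b) * (t - (t - \<tau> i t)) \<le> integral {t - \<tau> i t..t} (fZ i)"
  proof (rule integral_ge_const_times_length[OF fZ_continuous])
    fix x assume x: "x \<in> {t - \<tau> i t..t}"
    then have "- \<tau>0 i \<le> x" using delayed_time_ge[OF assms(1), of i] by auto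
    then show "f i (row_sum i * b) \<le> fZ i x"
      unfolding fZ_def using x bound by (intro f_antimono Zfun_le_row_sum) auto
  qed (use tau_nonneg[OF assms(1)] in simp)
  then show ?thesis using window_integral_eq[OF assms(1)] by (simp add: mult.commute)
qed

text \<open>If the density at the start of a maturation window is at least \<open>b\<close> and the window were
  shorter than \<open>l\<close>, the density would stay above \<open>b * exp (- \<mu>A i * l)\<close> on the whole window,
  which makes the window integral too small.\<close>
lemma tau_gt_if_delayed_density_ge:
  assumes "t \<ge> 0" "0 \<le> t - \<tau> i t" "b \<le> A i (t - \<tau> i t)"
    and small: "l * f i (\<zeta> i i * b * exp (- \<mu>A i * l)) < maturation_level i"
  shows "\<tau> i t > l"
proof (rule ccontr)
  assume "\<not> \<tau> i t > l"
  then have tl: "\<tau> i t \<le> l" by simp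
  define u where "u = t - \<tau> i t"
  define m where "m = f i (\<zeta> i i * b * exp (- \<mu>A i * l))"
  have "fZ i v \<le> m" if v: "v \<in> {u..t}" for v
  proof -
    have "b * exp (- \<mu>A i * l) \<le> A i u * exp (- \<mu>A i * (v - u))"
      using v tl params_pos[of i] assms(3) A_nonneg[of i u] unfolding u_def
      by (intro mult_mono) auto
    also have "\<dots> \<le> A i v" using A_decay_bound[of u v i] v assms(2) unfolding u_def by auto
    finally have "\<zeta> i i * (b * exp (- \<mu>A i * l)) \<le> \<zeta> i i * A i v"
      using params_pos[of i] by (intro mult_left_mono) auto
    also have "\<dots> \<le> Zfun \<zeta> A i v" by (rule diag_le_Zfun)
    finally show ?thesis unfolding fZ_def m_def by (intro f_antimono) (simp add: mult.assoc)
  qed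
  then have "norm (integral {u..t} (fZ i)) \<le> m * (t - u)"
    using tau_nonneg[OF assms(1), of i] fZ_pos[of i] unfolding u_def
    by (intro integral_bound fZ_continuous) (auto simp: less_imp_le)
  also have "\<dots> \<le> m * l"
    using tl f_pos[of i] unfolding u_def m_def by (intro mult_left_mono) (auto intro: less_imp_le)
  finally show False
    using window_integral_eq[OF assms(1), of i] small unfolding u_def m_def by (simp add: mult.commute)
qed

lemma A_bounded_on_interval:
  obtains B where "B \<ge> 0" "\<And>j v. v \<in> {a..b} \<Longrightarrow> \<bar>A j v\<bar> \<le> B"
proof -
  have "continuous_on {a..b} (\<lambda>v. \<Sum>j\<in>UNIV. \<bar>A j v\<bar>)"
    by (intro continuous_intros continuous_on_subset[OF A_continuous]) auto
  then obtain B where B: "B \<ge> 0" "\<And>v. v \<in> {a..b} \<Longrightarrow> norm (\<Sum>j\<in>UNIV. \<bar>A j v\<bar>) \<le> B"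
    using continuous_on_compact_bound[OF compact_Icc] by blast
  have "\<bar>A j v\<bar> \<le> B" if "v \<in> {a..b}" for j v
  proof -
    have "\<bar>A j v\<bar> \<le> (\<Sum>j\<in>UNIV. \<bar>A j v\<bar>)" by (rule member_le_sum) auto
    also have "\<dots> \<le> B" using B(2)[OF that] by simp
    finally show ?thesis .
  qed
  with B(1) show ?thesis by (rule that)
qed

lemma history_bounded:
  obtains B where "B \<ge> 0" "\<And>i j v. - \<tau>0 i \<le> v \<Longrightarrow> v \<le> 0 \<Longrightarrow> A j v \<le> B"
proof -
  define T where "T = (\<Sum>i\<in>UNIV. \<tau>0 i)"
  have T: "\<tau>0 i \<le> T" for i
    unfolding T_def by (rule member_le_sum) (auto intro: tau0_nonneg)
  obtain B where B: "B \<ge> 0" "\<And>j v. v \<in> {-T..0} \<Longrightarrow> \<bar>A j v\<bar> \<le> B"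
    using A_bounded_on_interval[of "-T" 0] by metis
  have "A j v \<le> B" if "- \<tau>0 i \<le> v" "v \<le> 0" for i j v
    using B(2)[of v j] T[of i] that by auto
  with B(1) show thesis using that by blast
qed

lemma A_derivative_bounded:
  assumes "t \<ge> 0"
  obtains C where "C \<ge> 0" "\<And>s. s \<in> {0..t} \<Longrightarrow> \<bar>- \<mu>A i * A i s + birth i s\<bar> \<le> C"
proof -
  obtain B where B: "B \<ge> 0" "\<And>j v. v \<in> {- \<tau>0 i..t} \<Longrightarrow> \<bar>A j v\<bar> \<le> B"
    using A_bounded_on_interval[of "- \<tau>0 i" t] by metis
  define C where "C = \<mu>A i * B + \<beta> i * (f i 0 / f i (row_sum i * B)) * B"
  have "\<bar>- \<mu>A i * A i s + birth i s\<bar> \<le> C" if s: "s \<in> {0..t}" for s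
  proof -
    define u where "u = s - \<tau> i s"
    have u: "u \<in> {- \<tau>0 i..t}"
      using delayed_time_ge[of s i] tau_nonneg[of s i] s unfolding u_def by auto
    have "f i (row_sum i * B) \<le> fZ i u"
      unfolding fZ_def using B(2) u by (intro f_antimono Zfun_le_row_sum) (auto simp: abs_le_iff)
    then have "fZ i s / fZ i u \<le> f i 0 / f i (row_sum i * B)"
      using fZ_le_f0 f_pos fZ_pos by (intro frac_le) (auto intro: less_imp_le)
    moreover have "exp (- \<mu>J i * \<tau> i s) \<le> 1"
      using tau_nonneg[of s i] s params_pos[of i] by auto
    moreover have "A i u \<le> B" using B(2)[OF u, of i] by simp
    ultimately have "birth i s \<le> \<beta> i * 1 * (f i 0 / f i (row_sum i * B)) * B"
      unfolding birth_def u_def[symmetric] using params_pos[of i] A_nonneg[of i u] fZ_pos f_pos B(1)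
      by (intro mult_mono) (auto intro: less_imp_le)
    moreover have "0 \<le> \<mu>A i * A i s" "\<mu>A i * A i s \<le> \<mu>A i * B"
      using params_pos[of i] A_nonneg[of i s] B(2)[of s i] s tau0_nonneg[of i] by auto
    moreover have "0 \<le> \<beta> i * (f i 0 / f i (row_sum i * B)) * B"
      using params_pos[of i] B(1) f_pos[of i]
      by (intro mult_nonneg_nonneg divide_nonneg_nonneg) (auto intro: less_imp_le)
    ultimately show ?thesis using birth_nonneg[of i s] unfolding C_def by (simp add: abs_le_iff)
  qed
  moreover have "C \<ge> 0"
    unfolding C_def using params_pos[of i] B(1) f_pos[of i]
    by (intro add_nonneg_nonneg mult_nonneg_nonneg divide_nonneg_nonneg) (auto intro: less_imp_le)
  ultimately show ?thesis using that by blast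
qed

lemma weighted_shift_lipschitz_on_recent:
  assumes "\<alpha> > 0" "t \<ge> 0"
  obtains L where "L-lipschitz_on {-t..0} (\<lambda>\<theta>. exp (- \<alpha> * \<bar>\<theta>\<bar>) * A i (t + \<theta>))"
proof -
  obtain B where B: "B \<ge> 0" "\<And>j v. v \<in> {0..t} \<Longrightarrow> \<bar>A j v\<bar> \<le> B"
    using A_bounded_on_interval[of 0 t] by metis
  obtain C where C: "C \<ge> 0" "\<And>s. s \<in> {0..t} \<Longrightarrow> \<bar>- \<mu>A i * A i s + birth i s\<bar> \<le> C"
    using A_derivative_bounded[OF assms(2), of i] by metis
  define D where "D \<theta> = - \<mu>A i * A i (t + \<theta>) + birth i (t + \<theta>)" for \<theta>
  have "(\<alpha> * B + C)-lipschitz_on {-t..0} (\<lambda>\<theta>. exp (\<alpha> * \<theta>) * A i (t + \<theta>))"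
  proof (rule lipschitz_on_interval_if_deriv_bounded)
    fix \<theta> :: real assume \<theta>: "\<theta> \<in> {-t..0}"
    have "(A i has_real_derivative D \<theta>) (at (t + \<theta>) within (+) t ` {-t..0})"
      unfolding D_def by (rule DERIV_subset[OF A_has_derivative]) (use \<theta> in auto)
    moreover have "((+) t has_real_derivative 1) (at \<theta> within {-t..0})"
      by (auto intro!: derivative_eq_intros)
    ultimately have "((\<lambda>\<theta>. A i (t + \<theta>)) has_real_derivative D \<theta>) (at \<theta> within {-t..0})"
      using DERIV_image_chain by (fastforce simp: o_def)
    then show "((\<lambda>\<theta>. exp (\<alpha> * \<theta>) * A i (t + \<theta>)) has_real_derivative
        \<alpha> * exp (\<alpha> * \<theta>) * A i (t + \<theta>) + D \<theta> * exp (\<alpha> * \<theta>)) (at \<theta> within {-t..0})"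
      by (auto intro!: derivative_eq_intros DERIV_mult)
    have e: "0 < exp (\<alpha> * \<theta>)" "exp (\<alpha> * \<theta>) \<le> 1"
      using \<theta> assms(1) by (auto simp: mult_nonneg_nonpos)
    have "\<bar>A i (t + \<theta>)\<bar> \<le> B" "\<bar>D \<theta>\<bar> \<le> C"
      using B(2) C(2) \<theta> unfolding D_def by auto
    then have damped: "exp (\<alpha> * \<theta>) * \<bar>A i (t + \<theta>)\<bar> \<le> B" "\<bar>D \<theta>\<bar> * exp (\<alpha> * \<theta>) \<le> C"
      using mult_right_mono[OF e(2), of "\<bar>A i (t + \<theta>)\<bar>"] mult_left_mono[OF e(2), of "\<bar>D \<theta>\<bar>"]
      by simp_all
    have "\<alpha> * (exp (\<alpha> * \<theta>) * \<bar>A i (t + \<theta>)\<bar>) \<le> \<alpha> * B"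
      by (rule mult_left_mono[OF damped(1)]) (use assms(1) in simp)
    moreover have "\<bar>\<alpha> * exp (\<alpha> * \<theta>) * A i (t + \<theta>) + D \<theta> * exp (\<alpha> * \<theta>)\<bar>
        \<le> \<alpha> * (exp (\<alpha> * \<theta>) * \<bar>A i (t + \<theta>)\<bar>) + \<bar>D \<theta>\<bar> * exp (\<alpha> * \<theta>)"
      by (rule order_trans[OF abs_triangle_ineq]) (use assms(1) in \<open>simp add: abs_mult\<close>)
    ultimately show "\<bar>\<alpha> * exp (\<alpha> * \<theta>) * A i (t + \<theta>) + D \<theta> * exp (\<alpha> * \<theta>)\<bar> \<le> \<alpha> * B + C"
      using damped(2) by linarith
  qed (use assms(1) B(1) C(1) in simp)
  then show thesis by (intro that) (rule lipschitz_on_transform; auto)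
qed

text \<open>On \<open>{..-t}\<close> the weighted shifted history is a damped shift of the weighted initial
  history.\<close>
lemma shifted_history_in_X_space:
  assumes "\<phi> i \<in> X_space \<alpha>" "\<alpha> > 0" "t \<ge> 0"
  shows "(\<lambda>\<theta>. A i (t + \<theta>)) \<in> X_space \<alpha>"
proof -
  define w where "w = (\<lambda>\<theta>. exp (- \<alpha> * \<bar>\<theta>\<bar>) * A i (t + \<theta>))"
  define w\<phi> where "w\<phi> = (\<lambda>\<theta>. exp (- \<alpha> * \<bar>\<theta>\<bar>) * \<phi> i \<theta>)"
  have bounded_w\<phi>: "bounded (w\<phi> ` {..0})" and "\<exists>L. L-lipschitz_on {..0} w\<phi>"
    using assms(1) unfolding X_space_def w\<phi>_def by simp_all
  then obtain L\<phi> where L\<phi>: "L\<phi>-lipschitz_on {..0} w\<phi>" by blast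
  obtain L where L: "L-lipschitz_on {-t..0} w"
    using weighted_shift_lipschitz_on_recent[OF assms(2,3), of i] unfolding w_def by metis
  have w_past: "w \<theta> = exp (- \<alpha> * t) * w\<phi> (\<theta> + t)" if "\<theta> \<le> -t" for \<theta>
  proof -
    have "exp (- \<alpha> * \<bar>\<theta>\<bar>) = exp (- \<alpha> * t) * exp (- \<alpha> * \<bar>\<theta> + t\<bar>)"
      using that assms(3) by (simp add: algebra_simps flip: exp_add)
    then show ?thesis
      using A_initial[of "t + \<theta>" i] that unfolding w_def w\<phi>_def by (simp add: add.commute)
  qed
  have "\<bar>exp (- \<alpha> * t)\<bar> \<le> 1" using assms(2,3) by (simp add: mult_nonneg_nonneg)
  then have lipschitz_past: "L\<phi>-lipschitz_on {..-t} w"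
    by (rule lipschitz_on_transform[OF lipschitz_on_damped_shift[OF L\<phi>]]) (simp add: w_past)
  have "(L\<phi> + L)-lipschitz_on {..0} w"
  proof (rule lipschitz_on_atMost_glue[of _ "-t"])
    show "(L\<phi> + L)-lipschitz_on {..-t} w"
      by (rule lipschitz_on_mono[OF lipschitz_past order_refl]) (use lipschitz_on_nonneg[OF L] in simp)
    show "(L\<phi> + L)-lipschitz_on {-t..0} w"
      by (rule lipschitz_on_mono[OF L order_refl]) (use lipschitz_on_nonneg[OF L\<phi>] in simp)
  qed
  have shift_continuous: "continuous_on UNIV (\<lambda>\<theta>. A i (t + \<theta>))"
    using continuous_on_compose[of UNIV "(+) t" "A i"] A_continuous[of i]
    by (simp add: o_def continuous_on_add)
  then have "continuous_on UNIV w"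
    unfolding w_def by (intro continuous_intros)
  then have "bounded (w ` {-t..0})"
    by (intro compact_imp_bounded compact_continuous_image) (auto intro: continuous_on_subset)
  moreover have "w ` {..0} \<subseteq> (\<lambda>x. exp (- \<alpha> * t) *\<^sub>R x) ` (w\<phi> ` {..0}) \<union> w ` {-t..0}"
    using w_past by (force simp: image_iff)
  ultimately have "bounded (w ` {..0})"
    using bounded_scaling[OF bounded_w\<phi>] by (blast intro: bounded_subset bounded_Un[THEN iffD2])
  with \<open>(L\<phi> + L)-lipschitz_on {..0} w\<close> show ?thesis
    unfolding X_space_def using shift_continuous lipschitz_on_uniformly_continuous
    unfolding w_def by (blast intro: continuous_on_subset)
qed

lemma shifted_window_integral:
  assumes "t \<ge> 0"
  shows "integral {- \<tau> i t..0} (\<lambda>\<sigma>. f i (Zfun \<zeta> (\<lambda>i \<theta>. A i (t + \<theta>)) i \<sigma>)) = maturation_level i"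
proof -
  have "(\<lambda>\<sigma>. f i (Zfun \<zeta> (\<lambda>i \<theta>. A i (t + \<theta>)) i \<sigma>)) = fZ i \<circ> (+) t"
    unfolding fZ_def Zfun_def by (auto simp: add.commute)
  then show ?thesis
    using window_integral_eq[OF assms, of i] by (simp add: integral_shift_Icc_real add.commute)
qed

end

text \<open>The constants of the dissipativity argument: \<open>R i\<close> bounds \<open>f i x / f i (c x)\<close> for the factor
  \<open>c = 2 * row_sum i / \<zeta> i i\<close> relating the two arguments of \<open>f i\<close> in the birth term, a delay longer
  than \<open>L i\<close> damps the birth rate below \<open>\<mu>A i / 4\<close>, and a delayed density above \<open>K i\<close> forces a
  delay longer than \<open>L i\<close>.\<close>
locale solution_with_constants = solution +
  fixes \<delta> :: real and R L K
  assumes delta_pos: "\<delta> > 0"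
    and delta_le: "\<And>i. \<delta> \<le> integral {- \<tau>0 i..0} (\<lambda>\<sigma>. f i (Zfun \<zeta> \<phi> i \<sigma>))"
    and R_ge_1: "\<And>i. R i \<ge> 1"
    and f_ratio_le_R: "\<And>i x. x \<ge> 0 \<Longrightarrow> f i x / f i (2 * (\<Sum>j\<in>UNIV. \<zeta> i j) / \<zeta> i i * x) \<le> R i"
    and delay_factor_le: "\<And>i. \<beta> i * R i * exp (- \<mu>J i * L i) \<le> \<mu>A i / 4"
    and K_nonneg: "\<And>i. K i \<ge> 0"
    and K_large: "\<And>i. L i * f i (\<zeta> i i * K i * exp (- \<mu>A i * L i)) < \<delta>"
begin

lemma maturation_level_ge_delta: "\<delta> \<le> maturation_level i"
  using delta_le unfolding maturation_level_def by auto

lemma maturation_level_pos: "maturation_level i > 0"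
  using delta_pos maturation_level_ge_delta[of i] by linarith

lemma fZ_ratio_le_R:
  assumes "0 \<le> a" "a \<le> A i t" "\<And>j. A j u \<le> 2 * a"
  shows "fZ i t / fZ i u \<le> R i"
proof -
  define c where "c = 2 * row_sum i / \<zeta> i i"
  have \<zeta>: "0 < \<zeta> i i" using params_pos by auto
  have "\<zeta> i i * a \<le> Zfun \<zeta> A i t"
    using mult_left_mono[OF assms(2) less_imp_le[OF \<zeta>]] diag_le_Zfun[of i t] by linarith
  then have "fZ i t \<le> f i (\<zeta> i i * a)" unfolding fZ_def by (rule f_antimono)
  moreover have "f i (c * (\<zeta> i i * a)) \<le> fZ i u"
    unfolding fZ_def
  proof (rule f_antimono)
    have "Zfun \<zeta> A i u \<le> row_sum i * (2 * a)" by (rule Zfun_le_row_sum[OF assms(3)])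
    also have "\<dots> = c * (\<zeta> i i * a)" using \<zeta> unfolding c_def by (simp add: field_simps)
    finally show "Zfun \<zeta> A i u \<le> c * (\<zeta> i i * a)" .
  qed
  ultimately have "fZ i t / fZ i u \<le> f i (\<zeta> i i * a) / f i (c * (\<zeta> i i * a))"
    using f_pos fZ_pos by (intro frac_le) (auto intro: less_imp_le)
  also have "\<dots> \<le> R i"
    using f_ratio_le_R[of "\<zeta> i i * a" i] \<zeta> assms(1) unfolding c_def row_sum_def by simp
  finally show ?thesis .
qed

lemma damped_delayed_density_le:
  assumes "t \<ge> 0" "A i (t - \<tau> i t) \<le> 2 * a"
    and "t - \<tau> i t < 0 \<Longrightarrow> A i (t - \<tau> i t) \<le> \<Phi>" "\<Phi> \<ge> 0"
  shows "\<beta> i * R i * exp (- \<mu>J i * \<tau> i t) * A i (t - \<tau> i t)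
    \<le> max (\<mu>A i / 2 * a) (\<beta> i * R i * max (K i) \<Phi>)"
proof -
  define u where "u = t - \<tau> i t"
  define e where "e = exp (- \<mu>J i * \<tau> i t)"
  have pos: "\<beta> i * R i > 0" "e > 0" using params_pos R_ge_1[of i] unfolding e_def by auto
  have "e \<le> 1" using tau_nonneg[OF assms(1), of i] params_pos[of i] unfolding e_def by simp
  moreover have "0 \<le> \<beta> i * R i * A i u" using pos(1) A_nonneg[of i u] by simp
  ultimately have undamped: "\<beta> i * R i * e * A i u \<le> \<beta> i * R i * A i u"
    using mult_right_mono[of e 1 "\<beta> i * R i * A i u"] by (simp add: mult_ac)
  consider "u < 0" | "u \<ge> 0" "K i \<le> A i u" | "A i u < K i" by linarith
  then have "\<beta> i * R i * e * A i u \<le> max (\<mu>A i / 2 * a) (\<beta> i * R i * max (K i) \<Phi>)"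
  proof cases
    case 1
    then have "\<beta> i * R i * A i u \<le> \<beta> i * R i * max (K i) \<Phi>"
      using assms(3) pos unfolding u_def by (intro mult_left_mono) auto
    then show ?thesis using undamped by linarith
  next
    case 2
    have "\<tau> i t > L i"
      using tau_gt_if_delayed_density_ge[OF assms(1), of i "K i" "L i"] 2 K_large[of i]
        maturation_level_ge_delta[of i] unfolding u_def by linarith
    then have "e \<le> exp (- \<mu>J i * L i)" using params_pos[of i] unfolding e_def by simp
    then have "e * A i u \<le> exp (- \<mu>J i * L i) * (2 * a)"
      using assms(2) pos A_nonneg[of i u] unfolding u_def by (intro mult_mono) auto
    from mult_left_mono[OF this less_imp_le[OF pos(1)]]
    have "\<beta> i * R i * e * A i u \<le> \<beta> i * R i * exp (- \<mu>J i * L i) * (2 * a)"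
      by (simp add: mult_ac)
    also have "\<dots> \<le> \<mu>A i / 4 * (2 * a)"
      using delay_factor_le[of i] assms(2) 2 K_nonneg[of i] unfolding u_def
      by (intro mult_right_mono) auto
    finally show ?thesis by (simp add: le_max_iff_disj mult.commute)
  next
    case 3
    then have "\<beta> i * R i * A i u \<le> \<beta> i * R i * max (K i) \<Phi>"
      using pos by (intro mult_left_mono) auto
    then show ?thesis using undamped by linarith
  qed
  then show ?thesis unfolding u_def e_def .
qed

lemma birth_le:
  assumes "t \<ge> 0" "0 \<le> a" "a \<le> A i t" "\<And>j. A j (t - \<tau> i t) \<le> 2 * a"
    and "t - \<tau> i t < 0 \<Longrightarrow> A i (t - \<tau> i t) \<le> \<Phi>" "\<Phi> \<ge> 0"
  shows "birth i t \<le> max (\<mu>A i / 2 * a) (\<beta> i * R i * max (K i) \<Phi>)"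
proof -
  have "0 \<le> \<beta> i * exp (- \<mu>J i * \<tau> i t) * A i (t - \<tau> i t)"
    using params_pos[of i] A_nonneg by simp
  have "birth i t = \<beta> i * exp (- \<mu>J i * \<tau> i t) * A i (t - \<tau> i t) * (fZ i t / fZ i (t - \<tau> i t))"
    unfolding birth_def by (simp add: mult_ac)
  also have "\<dots> \<le> \<beta> i * exp (- \<mu>J i * \<tau> i t) * A i (t - \<tau> i t) * R i"
    by (rule mult_left_mono[OF fZ_ratio_le_R[OF assms(2,3,4)]]) fact
  also have "\<dots> \<le> max (\<mu>A i / 2 * a) (\<beta> i * R i * max (K i) \<Phi>)"
    using damped_delayed_density_le[OF assms(1) assms(4) assms(5,6)] by (simp add: mult_ac)
  finally show ?thesis .
qed


text \<open>First-passage argument: at the first time \<open>t\<close> some density reaches \<open>Q\<close>, the birth term is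
  below \<open>\<mu>A k * Q\<close>, so \<open>A k\<close> would be strictly decreasing at \<open>t\<close>.\<close>
lemma A_lt_level:
  assumes history: "\<And>i j v. - \<tau>0 i \<le> v \<Longrightarrow> v \<le> 0 \<Longrightarrow> A j v \<le> \<Phi>" and "0 \<le> \<Phi>" "\<Phi> < Q"
    and level: "\<And>i. \<beta> i * R i * max (K i) \<Phi> < \<mu>A i * Q"
    and "s \<ge> 0"
  shows "A i s < Q"
proof (rule ccontr)
  assume "\<not> A i s < Q"
  then obtain t k where t: "t \<ge> 0" "Q \<le> A k t" and before: "\<And>j v. 0 \<le> v \<Longrightarrow> v < t \<Longrightarrow> A j v < Q"
    using first_hitting_time[of A s Q i] A_continuous \<open>s \<ge> 0\<close> by (metis not_less)
  have "t \<noteq> 0" using history[of k 0 k] tau0_nonneg[of k] t \<open>\<Phi> < Q\<close> by auto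
  with t(1) have "t > 0" by simp
  define u where "u = t - \<tau> k t"
  have "u < t" using tau_pos[OF t(1) maturation_level_pos] unfolding u_def by simp
  have delayed: "A j u \<le> Q" for j
  proof (cases "u < 0")
    case True
    then show ?thesis
      using history[of k u j] delayed_time_ge[OF t(1), of k] \<open>\<Phi> < Q\<close> unfolding u_def by auto
  next
    case False
    then show ?thesis using before[of u j] \<open>u < t\<close> by auto
  qed
  have "birth k t \<le> max (\<mu>A k / 2 * (Q / 2)) (\<beta> k * R k * max (K k) \<Phi>)"
    using delayed history[of k u k] delayed_time_ge[OF t(1), of k] t \<open>0 \<le> \<Phi>\<close> \<open>\<Phi> < Q\<close>
    unfolding u_def by (intro birth_le) auto
  moreover have "\<mu>A k / 2 * (Q / 2) < \<mu>A k * Q" using params_pos[of k] \<open>0 \<le> \<Phi>\<close> \<open>\<Phi> < Q\<close> by simp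
  moreover have "\<mu>A k * Q \<le> \<mu>A k * A k t" using t(2) params_pos[of k] by simp
  ultimately have "- \<mu>A k * A k t + birth k t < 0" using level[of k] by linarith
  moreover have "0 \<le> - \<mu>A k * A k t + birth k t"
    by (rule deriv_nonneg_at_first_hitting[OF A_has_derivative_at[OF \<open>t > 0\<close>] \<open>t > 0\<close> t(2)])
      (use before in auto)
  ultimately show False by simp
qed

lemma A_bounded:
  obtains Q where "\<And>i j v. - \<tau>0 i \<le> v \<Longrightarrow> A j v \<le> Q"
proof -
  obtain B where B: "B \<ge> 0" and history: "\<And>i j v. - \<tau>0 i \<le> v \<Longrightarrow> v \<le> 0 \<Longrightarrow> A j v \<le> B"
    using history_bounded by metis
  define Q where "Q = B + 1 + (\<Sum>i\<in>UNIV. \<beta> i * R i * (K i + B) / \<mu>A i)"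
  have nonneg: "0 \<le> \<beta> i * R i * (K i + B) / \<mu>A i" for i
    using params_pos[of i] R_ge_1[of i] K_nonneg[of i] B(1) by simp
  have term_lt_Q: "\<beta> i * R i * (K i + B) / \<mu>A i < Q" for i
  proof -
    have "\<beta> i * R i * (K i + B) / \<mu>A i \<le> (\<Sum>i\<in>UNIV. \<beta> i * R i * (K i + B) / \<mu>A i)"
      by (rule member_le_sum) (use nonneg in auto)
    then show ?thesis using B(1) unfolding Q_def by simp
  qed
  have "0 \<le> (\<Sum>i\<in>UNIV. \<beta> i * R i * (K i + B) / \<mu>A i)" by (rule sum_nonneg) (rule nonneg)
  then have "B < Q" unfolding Q_def by simp
  have level: "\<beta> i * R i * max (K i) B < \<mu>A i * Q" for i
  proof -
    have "\<beta> i * R i * max (K i) B \<le> \<beta> i * R i * (K i + B)"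
      using params_pos[of i] R_ge_1[of i] K_nonneg[of i] B(1) by (intro mult_left_mono) auto
    also have "\<dots> = \<mu>A i * (\<beta> i * R i * (K i + B) / \<mu>A i)"
      using params_pos[of i] by simp
    also have "\<dots> < \<mu>A i * Q"
      by (rule mult_strict_left_mono[OF term_lt_Q params_pos(1)])
    finally show ?thesis .
  qed
  have "A j v \<le> Q" if "- \<tau>0 i \<le> v" for i j v
  proof (cases "v \<le> 0")
    case True
    then show ?thesis using history[OF that, of j] \<open>B < Q\<close> by simp
  next
    case False
    then have "A j v < Q"
      by (intro A_lt_level[where \<Phi>=B]) (use history B(1) \<open>B < Q\<close> level in auto)
    then show ?thesis by simp
  qed
  then show thesis using that by blast
qed


lemma tau_bounded:
  obtains T where "T \<ge> 0" "\<And>i t. t \<ge> 0 \<Longrightarrow> \<tau> i t \<le> T"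
proof -
  obtain Q where Q: "\<And>i j v. - \<tau>0 i \<le> v \<Longrightarrow> A j v \<le> Q" using A_bounded by metis
  define T where "T = Max (range (\<lambda>i. maturation_level i / f i (row_sum i * Q)))"
  have "\<tau> i t \<le> T" if "t \<ge> 0" for i t
  proof -
    have "\<tau> i t * f i (row_sum i * Q) \<le> maturation_level i"
      by (rule tau_mult_le_maturation_level[OF that]) (rule Q)
    then have "\<tau> i t \<le> maturation_level i / f i (row_sum i * Q)"
      using f_pos by (simp add: pos_le_divide_eq)
    also have "\<dots> \<le> T" unfolding T_def by (rule Max_ge) auto
    finally show ?thesis .
  qed
  moreover have "T \<ge> 0" using calculation[of 0 undefined] tau_nonneg[of 0 undefined] by simp
  ultimately show thesis using that by blast
qed

text \<open>Since the delays are bounded, eventually the delayed densities are below \<open>4 p / 3\<close> as well,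
  and then \<open>A i\<close> decreases at rate at least \<open>\<mu>A i * p / 3\<close> whenever it is at least \<open>2 p / 3\<close>.\<close>
lemma eventually_A_le_two_thirds:
  assumes "p > 0" "\<And>i. 3 * \<beta> i * R i * K i / \<mu>A i \<le> p"
    and "eventually (\<lambda>t. \<forall>j. A j t < 4 * p / 3) at_top"
  shows "eventually (\<lambda>t. A i t \<le> 2 * p / 3) at_top"
proof -
  obtain T1 where T1: "\<And>t j. t \<ge> T1 \<Longrightarrow> A j t < 4 * p / 3"
    using assms(3) unfolding eventually_at_top_linorder by blast
  obtain T where T: "T \<ge> 0" "\<And>i t. t \<ge> 0 \<Longrightarrow> \<tau> i t \<le> T" using tau_bounded by metis
  show ?thesis
  proof (rule eventually_below_if_deriv_le_neg_above[OF A_continuous])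
    show "\<mu>A i * p / 3 > 0" using params_pos[of i] assms(1) by simp
    fix z assume z: "z > max T1 0 + T" "2 * p / 3 \<le> A i z"
    then have "z > 0" using T(1) by linarith
    have delayed: "T1 \<le> z - \<tau> i z" "0 \<le> z - \<tau> i z"
      using T(2)[of z i] \<open>z > 0\<close> z(1) by auto
    have "birth i z \<le> max (\<mu>A i / 2 * (2 * p / 3)) (\<beta> i * R i * max (K i) 0)"
      using T1 delayed z(2) assms(1) \<open>z > 0\<close> by (intro birth_le) (auto intro: less_imp_le)
    also have "\<dots> \<le> \<mu>A i * p / 3"
    proof -
      have "\<beta> i * R i * K i \<le> \<mu>A i * p / 3"
        using assms(2)[of i] params_pos[of i] by (simp add: field_simps)
      then show ?thesis using K_nonneg[of i] by simp
    qed
    moreover have "\<mu>A i * (2 * p / 3) \<le> \<mu>A i * A i z"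
      using z(2) params_pos[of i] by (intro mult_left_mono) auto
    ultimately have "- \<mu>A i * A i z + birth i z \<le> - (\<mu>A i * p / 3)" by simp
    then show "\<exists>D. (A i has_real_derivative D) (at z) \<and> D \<le> - (\<mu>A i * p / 3)"
      using A_has_derivative_at[OF \<open>z > 0\<close>] by blast
  qed
qed

lemma Limsup_Max_A_le:
  "Limsup at_top (\<lambda>t. ereal (Max (range (\<lambda>i. A i t))))
     \<le> ereal (\<Sum>i\<in>UNIV. 3 * \<beta> i * R i * K i / \<mu>A i)"
proof -
  have nonneg: "0 \<le> 3 * \<beta> i * R i * K i / \<mu>A i" for i
    using params_pos[of i] R_ge_1[of i] K_nonneg[of i] by simp
  obtain Q where Q: "\<And>i j v. - \<tau>0 i \<le> v \<Longrightarrow> A j v \<le> Q" using A_bounded by metis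
  show ?thesis
  proof (rule Limsup_le_if_contracting[where B = Q])
    show bound_nonneg: "0 \<le> (\<Sum>i\<in>UNIV. 3 * \<beta> i * R i * K i / \<mu>A i)"
      using nonneg by (rule sum_nonneg)
    have "A j v \<le> Q" if "v \<ge> 0" for j v
      using Q[of j v j] tau0_nonneg[of j] that by linarith
    then show "eventually (\<lambda>t. Max (range (\<lambda>i. A i t)) \<le> Q) at_top"
      unfolding eventually_at_top_linorder by (intro exI[of _ 0] allI impI) (simp add: Max_le_iff)
    fix p assume p: "p > (\<Sum>i\<in>UNIV. 3 * \<beta> i * R i * K i / \<mu>A i)"
      and "eventually (\<lambda>t. Max (range (\<lambda>i. A i t)) < 4 * p / 3) at_top"
    from this(2) have "eventually (\<lambda>t. \<forall>j. A j t < 4 * p / 3) at_top"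
    proof (rule eventually_mono)
      fix t assume "Max (range (\<lambda>i. A i t)) < 4 * p / 3"
      moreover have "A j t \<le> Max (range (\<lambda>i. A i t))" for j by (rule Max_ge) auto
      ultimately show "\<forall>j. A j t < 4 * p / 3" by (meson le_less_trans)
    qed
    moreover have "3 * \<beta> i * R i * K i / \<mu>A i \<le> p" for i
      using member_le_sum[of i UNIV "\<lambda>i. 3 * \<beta> i * R i * K i / \<mu>A i"] nonneg p by fastforce
    moreover have "p > 0" using p bound_nonneg by linarith
    ultimately have "eventually (\<lambda>t. A i t \<le> 2 * p / 3) at_top" for i
      by (intro eventually_A_le_two_thirds) auto
    then have "eventually (\<lambda>t. \<forall>i. A i t \<le> 2 * p / 3) at_top"
      by (rule eventually_all_finite)
    then show "eventually (\<lambda>t. Max (range (\<lambda>i. A i t)) \<le> 2 * p / 3) at_top"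
      by (rule eventually_mono) (rule Max.boundedI; auto)
  qed
qed

end

lemma bound_constants_exist:
  fixes \<mu>A \<mu>J \<beta> :: "'n::finite \<Rightarrow> real" and \<zeta> :: "'n \<Rightarrow> 'n \<Rightarrow> real"
    and f :: "'n \<Rightarrow> real \<Rightarrow> real"
  assumes assmA: "assumptionA \<mu>A \<mu>J \<beta> \<zeta> f" and "\<delta> > 0"
  obtains R L K where "\<And>i. R i \<ge> 1"
    "\<And>i x. x \<ge> 0 \<Longrightarrow> f i x / f i (2 * (\<Sum>j\<in>UNIV. \<zeta> i j) / \<zeta> i i * x) \<le> R i"
    "\<And>i. \<beta> i * R i * exp (- \<mu>J i * L i) \<le> \<mu>A i / 4"
    "\<And>i. K i \<ge> 0" "\<And>i. L i * f i (\<zeta> i i * K i * exp (- \<mu>A i * L i)) < \<delta>"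
proof -
  have "\<exists>r l k. r \<ge> 1 \<and> (\<forall>x\<ge>0. f i x / f i (2 * (\<Sum>j\<in>UNIV. \<zeta> i j) / \<zeta> i i * x) \<le> r) \<and>
      \<beta> i * r * exp (- \<mu>J i * l) \<le> \<mu>A i / 4 \<and>
      k \<ge> 0 \<and> l * f i (\<zeta> i i * k * exp (- \<mu>A i * l)) < \<delta>" for i
  proof -
    have pos: "\<mu>A i > 0" "\<mu>J i > 0" "\<beta> i > 0" "\<zeta> i i > 0" "\<And>j. \<zeta> i j \<ge> 0"
      using assmA unfolding assumptionA_def by auto
    define c where "c = 2 * (\<Sum>j\<in>UNIV. \<zeta> i j) / \<zeta> i i"
    have "\<zeta> i i \<le> (\<Sum>j\<in>UNIV. \<zeta> i j)" by (rule member_le_sum) (use pos in auto)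
    then have "c \<ge> 1" using pos unfolding c_def by (simp add: field_simps)
    then obtain r0 where r0: "\<forall>x\<ge>0. f i x / f i (c * x) \<le> r0"
      using assmA unfolding assumptionA_def by blast
    define r where "r = max r0 1"
    have r: "r \<ge> 1" "\<forall>x\<ge>0. f i x / f i (c * x) \<le> r"
      using r0 unfolding r_def by (auto intro: order_trans)
    obtain l where l: "l > 0" "\<beta> i * r * exp (- \<mu>J i * l) \<le> \<mu>A i / 4"
      using exists_exp_decay_le[of "\<beta> i * r" "\<mu>J i" "\<mu>A i / 4"] pos r(1) by auto
    have "(f i \<longlongrightarrow> 0) at_top" using assmA unfolding assumptionA_def by auto
    then obtain k where k: "k \<ge> 0" "f i (\<zeta> i i * exp (- \<mu>A i * l) * k) < \<delta> / l"
      using exists_scaled_arg_below[of "f i" "\<zeta> i i * exp (- \<mu>A i * l)" "\<delta> / l"] pos(4) l(1)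
        \<open>\<delta> > 0\<close> by auto
    then have "l * f i (\<zeta> i i * k * exp (- \<mu>A i * l)) < \<delta>"
      using l(1) by (simp add: field_simps mult_ac)
    with k(1) r l show ?thesis unfolding c_def by blast
  qed
  then obtain R L K where "\<And>i. R i \<ge> 1 \<and>
      (\<forall>x\<ge>0. f i x / f i (2 * (\<Sum>j\<in>UNIV. \<zeta> i j) / \<zeta> i i * x) \<le> R i) \<and>
      \<beta> i * R i * exp (- \<mu>J i * L i) \<le> \<mu>A i / 4 \<and>
      K i \<ge> 0 \<and> L i * f i (\<zeta> i i * K i * exp (- \<mu>A i * L i)) < \<delta>"
    by metis
  then show thesis using that by blast
qed

lemma D_set_positively_invariant:
  fixes \<mu>A \<mu>J \<beta> :: "'n::finite \<Rightarrow> real" and \<zeta> :: "'n \<Rightarrow> 'n \<Rightarrow> real"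
    and f :: "'n \<Rightarrow> real \<Rightarrow> real"
  assumes "assumptionA \<mu>A \<mu>J \<beta> \<zeta> f" "\<alpha> > 0" and D: "(\<phi>, \<tau>0) \<in> D_set \<alpha> \<zeta> f \<delta>"
    and "is_solution \<mu>A \<mu>J \<beta> \<zeta> f \<phi> \<tau>0 A \<tau>" "t \<ge> 0"
  shows "((\<lambda>i \<theta>. A i (t + \<theta>)), (\<lambda>i. \<tau> i t)) \<in> D_set \<alpha> \<zeta> f \<delta>"
proof -
  interpret solution \<mu>A \<mu>J \<beta> \<zeta> f \<phi> \<tau>0 A \<tau>
    using assms D unfolding D_set_def by unfold_locales auto
  show ?thesis
    using D shifted_history_in_X_space[OF _ assms(2,5)] tau_nonneg[OF assms(5)]
      shifted_window_integral[OF assms(5)]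
    unfolding D_set_def maturation_level_def by auto
qed

lemma Limsup_Max_uniformly_bounded:
  fixes \<mu>A \<mu>J \<beta> :: "'n::finite \<Rightarrow> real" and \<zeta> :: "'n \<Rightarrow> 'n \<Rightarrow> real"
    and f :: "'n \<Rightarrow> real \<Rightarrow> real"
  assumes "assumptionA \<mu>A \<mu>J \<beta> \<zeta> f" "\<delta> > 0"
  shows "\<exists>M>0. \<forall>\<phi> \<tau>0 A \<tau>. (\<phi>, \<tau>0) \<in> D_set \<alpha> \<zeta> f \<delta> \<longrightarrow>
    is_solution \<mu>A \<mu>J \<beta> \<zeta> f \<phi> \<tau>0 A \<tau> \<longrightarrow>
    Limsup at_top (\<lambda>t. ereal (Max (range (\<lambda>i. A i t)))) \<le> ereal M"
proof -
  obtain R L K where constants: "\<And>i. R i \<ge> 1"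
    "\<And>i x. x \<ge> 0 \<Longrightarrow> f i x / f i (2 * (\<Sum>j\<in>UNIV. \<zeta> i j) / \<zeta> i i * x) \<le> R i"
    "\<And>i. \<beta> i * R i * exp (- \<mu>J i * L i) \<le> \<mu>A i / 4"
    "\<And>i. K i \<ge> 0" "\<And>i. L i * f i (\<zeta> i i * K i * exp (- \<mu>A i * L i)) < \<delta>"
    using bound_constants_exist[OF assms] by metis
  define M where "M = 1 + (\<Sum>i\<in>UNIV. 3 * \<beta> i * R i * K i / \<mu>A i)"
  have "0 \<le> 3 * \<beta> i * R i * K i / \<mu>A i" for i
  proof -
    have "\<beta> i > 0" "\<mu>A i > 0" using assms(1) unfolding assumptionA_def by auto
    then show ?thesis using constants(1,4)[of i] by simp
  qed
  then have "M > 0" unfolding M_def by (intro add_pos_nonneg sum_nonneg) auto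
  moreover have "Limsup at_top (\<lambda>t. ereal (Max (range (\<lambda>i. A i t)))) \<le> ereal M"
    if D: "(\<phi>, \<tau>0) \<in> D_set \<alpha> \<zeta> f \<delta>" and sol: "is_solution \<mu>A \<mu>J \<beta> \<zeta> f \<phi> \<tau>0 A \<tau>"
    for \<phi> \<tau>0 A \<tau>
  proof -
    interpret solution_with_constants \<mu>A \<mu>J \<beta> \<zeta> f \<phi> \<tau>0 A \<tau> \<delta> R L K
      using assms sol D constants unfolding D_set_def by unfold_locales auto
    show ?thesis using Limsup_Max_A_le unfolding M_def by (rule order_trans) simp
  qed
  ultimately show ?thesis by blast
qed

theorem mainTheorem8:
  fixes \<mu>A \<mu>J \<beta> :: "'n::finite \<Rightarrow> real" and \<zeta> :: "'n \<Rightarrow> 'n \<Rightarrow> real"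
    and f :: "'n \<Rightarrow> real \<Rightarrow> real" and \<alpha> :: real
  assumes "assumptionA \<mu>A \<mu>J \<beta> \<zeta> f" and "\<alpha> > 0"
  shows "(\<forall>\<delta>\<ge>0. \<forall>\<phi> \<tau>0 A \<tau>. (\<phi>, \<tau>0) \<in> D_set \<alpha> \<zeta> f \<delta> \<longrightarrow>
            is_solution \<mu>A \<mu>J \<beta> \<zeta> f \<phi> \<tau>0 A \<tau> \<longrightarrow>
            (\<forall>t\<ge>0. ((\<lambda>i \<theta>. A i (t + \<theta>)), (\<lambda>i. \<tau> i t)) \<in> D_set \<alpha> \<zeta> f \<delta>))
       \<and> (\<forall>\<delta>>0. \<exists>M>0. \<forall>\<phi> \<tau>0 A \<tau>.
            (\<phi>, \<tau>0) \<in> D_set \<alpha> \<zeta> f \<delta> \<longrightarrow>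
            (\<forall>i \<theta>. \<theta> \<le> 0 \<longrightarrow> \<phi> i \<theta> \<ge> 0) \<longrightarrow> (\<forall>i. \<tau>0 i > 0) \<longrightarrow>
            is_solution \<mu>A \<mu>J \<beta> \<zeta> f \<phi> \<tau>0 A \<tau> \<longrightarrow>
            Limsup at_top (\<lambda>t. ereal (Max (range (\<lambda>i. A i t)))) \<le> ereal M)"
proof (intro conjI allI impI)
  fix \<delta> :: real and \<phi> \<tau>0 A \<tau> and t :: real
  assume "(\<phi>, \<tau>0) \<in> D_set \<alpha> \<zeta> f \<delta>" "is_solution \<mu>A \<mu>J \<beta> \<zeta> f \<phi> \<tau>0 A \<tau>" "t \<ge> 0"
  then show "((\<lambda>i \<theta>. A i (t + \<theta>)), (\<lambda>i. \<tau> i t)) \<in> D_set \<alpha> \<zeta> f \<delta>"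
    by (rule D_set_positively_invariant[OF assms])
next
  fix \<delta> :: real assume "\<delta> > 0"
  then obtain M where "M > 0" and bound: "\<And>\<phi> \<tau>0 A \<tau>. (\<phi>, \<tau>0) \<in> D_set \<alpha> \<zeta> f \<delta> \<Longrightarrow>
      is_solution \<mu>A \<mu>J \<beta> \<zeta> f \<phi> \<tau>0 A \<tau> \<Longrightarrow>
      Limsup at_top (\<lambda>t. ereal (Max (range (\<lambda>i. A i t)))) \<le> ereal M"
    using Limsup_Max_uniformly_bounded[OF assms(1)] by meson
  then show "\<exists>M>0. \<forall>\<phi> \<tau>0 A \<tau>. (\<phi>, \<tau>0) \<in> D_set \<alpha> \<zeta> f \<delta> \<longrightarrow>
      (\<forall>i \<theta>. \<theta> \<le> 0 \<longrightarrow> \<phi> i \<theta> \<ge> 0) \<longrightarrow> (\<forall>i. \<tau>0 i > 0) \<longrightarrow>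
      is_solution \<mu>A \<mu>J \<beta> \<zeta> f \<phi> \<tau>0 A \<tau> \<longrightarrow>
      Limsup at_top (\<lambda>t. ereal (Max (range (\<lambda>i. A i t)))) \<le> ereal M"
    by (intro exI[of _ M]) simp
qed

end
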